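(* Given $R_1>0$, there exists a unique $q\in C([0,\infty))\cap C^\infty((0,\infty))$ solution to $$\partial_{ss}q+\Big(\frac1s+\frac{3s}{R_1(1+\frac{s^2}{2R_1})}\Big)\partial_sq-\frac{q}{s^2}=-\frac{12s}{(1+\frac{s^2}{2R_1})^3},\quad s\in(0,\infty),\qquad q(0)=0,\quad\lim_{s\to\infty}q(s)=0.$$ Furthermore, $$q(s)=\frac{48R_1^3}{5s^3}+\mathrm{rem}(s),\qquad\partial_sq(s)=-\frac{144R_1^3}{5s^4}+\frac{\mathrm{rem}(s)}{s},$$ where $|\mathrm{rem}(s)|\le K[R_1]/s^4$ for $s>1$, with $K[R_1]$ a constant depending only on $R_1$. *)

theory Defs
  imports "HOL-Analysis.Analysis"
begin

text \<open>C-infinity on a set S (intended for open S): every iterated derivative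
  exists, i.e. is differentiable at every point of S.\<close>
definition smooth_on :: "real set \<Rightarrow> (real \<Rightarrow> real) \<Rightarrow> bool" where
  "smooth_on S f \<longleftrightarrow> (\<forall>n. \<forall>x\<in>S. ((deriv ^^ n) f) differentiable (at x))"

definition is_sol :: "real \<Rightarrow> (real \<Rightarrow> real) \<Rightarrow> bool" where
  "is_sol R1 q \<longleftrightarrow>
     continuous_on {0..} q \<and> smooth_on {0<..} q \<and>
     (\<forall>s>0. deriv (deriv q) s
              + (1 / s + 3 * s / (R1 * (1 + s\<^sup>2 / (2 * R1)))) * deriv q s
              - q s / s\<^sup>2
            = - 12 * s / (1 + s\<^sup>2 / (2 * R1)) ^ 3) \<and>
     q 0 = 0 \<and> (q \<longlongrightarrow> 0) at_top"

end

theory Submission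
  imports Defs "HOL-Computational_Algebra.Polynomial" "HOL-Real_Asymp.Real_Asymp"
begin

text \<open>The equation is linear, and the ansatz \<open>q s = C s / (2 R1 + s\<^sup>2)\<^sup>2\<close> solves it
  exactly for \<open>C = 48 R1\<^sup>3 / 5\<close>; expanding this rational function at infinity gives the
  asymptotics. Uniqueness is a maximum principle: the difference \<open>h\<close> of two solutions solves
  the homogeneous equation, vanishes at \<open>0\<close> and at infinity, so a positive value of \<open>h\<close> would
  produce an interior maximum, where \<open>h' = 0\<close> and hence \<open>h'' = h / s\<^sup>2 > 0\<close>, which is
  impossible.\<close>

lemma DERIV2_local_max_nonpos:
  fixes f f' :: "real \<Rightarrow> real"
  assumes der: "\<And>y. \<bar>x - y\<bar> < d \<Longrightarrow> (f has_real_derivative f' y) (at y)"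
    and der2: "(f' has_real_derivative l) (at x)"
    and crit: "f' x = 0"
    and d: "0 < d"
    and le: "\<And>y. \<bar>x - y\<bar> < d \<Longrightarrow> f y \<le> f x"
  shows "l \<le> 0"
proof (rule ccontr)
  assume "\<not> l \<le> 0"
  then obtain d' where d': "0 < d'" and inc: "\<And>h. 0 < h \<Longrightarrow> h < d' \<Longrightarrow> f' x < f' (x + h)"
    using DERIV_pos_inc_right[OF der2] by auto
  obtain e where e: "0 < e" "e < d" "e < d'"
    using field_lbound_gt_zero[OF d d'] by blast
  obtain z where z: "x < z" "z < x + e" and mvt: "f (x + e) - f x = e * f' z"
    using MVT2[of x "x + e" f f'] e der by force
  have "f' z > 0"
    using inc[of "z - x"] z e crit by auto
  with mvt e have "f (x + e) > f x"
    by (simp add: algebra_simps)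
  with le[of "x + e"] e show False
    by auto
qed

lemma halfline_attains_max:
  fixes h :: "real \<Rightarrow> real"
  assumes cont: "continuous_on {0..} h" and lim: "(h \<longlongrightarrow> 0) at_top"
    and x: "x \<ge> 0" "h x > 0"
  obtains m where "m \<ge> 0" "h x \<le> h m" "\<And>y. y \<ge> 0 \<Longrightarrow> h y \<le> h m"
proof -
  obtain B where B: "\<And>y. y \<ge> B \<Longrightarrow> h y < h x"
    using order_tendstoD(2)[OF lim x(2)] by (auto simp: eventually_at_top_linorder)
  have "continuous_on {0..max B x} h"
    using cont by (rule continuous_on_subset) auto
  moreover have "{0..max B x} \<noteq> {}"
    using x(1) by auto
  ultimately obtain m where m: "m \<in> {0..max B x}" and mmax: "\<And>y. y \<in> {0..max B x} \<Longrightarrow> h y \<le> h m"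
    using continuous_attains_sup[OF compact_Icc] by metis
  have "h x \<le> h m"
    using mmax x(1) by auto
  moreover have "h y \<le> h m" if "y \<ge> 0" for y
    using mmax[of y] B[of y] that \<open>h x \<le> h m\<close> by (cases "y \<le> max B x") force+
  ultimately show thesis
    using that m by auto
qed

lemma halfline_maximum_principle:
  fixes h h' h'' :: "real \<Rightarrow> real"
  assumes cont: "continuous_on {0..} h" and h0: "h 0 = 0" and lim: "(h \<longlongrightarrow> 0) at_top"
    and der: "\<And>s. s > 0 \<Longrightarrow> (h has_real_derivative h' s) (at s)"
    and der2: "\<And>s. s > 0 \<Longrightarrow> (h' has_real_derivative h'' s) (at s)"
    and convex_at_crit: "\<And>s. s > 0 \<Longrightarrow> h' s = 0 \<Longrightarrow> h s > 0 \<Longrightarrow> h'' s > 0"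
    and x: "x \<ge> 0"
  shows "h x \<le> 0"
proof (rule ccontr)
  assume "\<not> h x \<le> 0"
  then obtain m where m: "m \<ge> 0" "h x \<le> h m" and mmax: "\<And>y. y \<ge> 0 \<Longrightarrow> h y \<le> h m"
    using halfline_attains_max[OF cont lim x] by auto
  have hm: "h m > 0" using m \<open>\<not> h x \<le> 0\<close> by linarith
  with h0 m have "m > 0" by (cases "m = 0") auto
  have near: "\<bar>m - y\<bar> < m \<Longrightarrow> y > 0" for y by auto
  have "h' m = 0"
    using DERIV_local_max[OF der[OF \<open>m > 0\<close>] \<open>m > 0\<close>] mmax near by force
  moreover have "h'' m \<le> 0"
    by (rule DERIV2_local_max_nonpos[OF der der2 _ \<open>m > 0\<close>])
      (use \<open>h' m = 0\<close> \<open>m > 0\<close> near mmax in \<open>auto intro: less_imp_le\<close>)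
  ultimately show False
    using convex_at_crit \<open>m > 0\<close> hm by force
qed

lemma has_real_derivative_poly_quotient:
  fixes p r :: "real poly"
  assumes "poly r x \<noteq> 0"
  shows "((\<lambda>s. poly p s / poly r s) has_real_derivative
           poly (pderiv p * r - p * pderiv r) x / poly (r * r) x) (at x)"
  using DERIV_quotient[OF poly_DERIV poly_DERIV assms]
  by (simp add: power2_eq_square algebra_simps)

lemma smooth_on_poly_quotient:
  fixes p r :: "real poly"
  assumes r: "\<And>x. poly r x \<noteq> 0"
  shows "smooth_on S (\<lambda>s. poly p s / poly r s)"
proof -
  have "\<exists>p' r'. (\<forall>x. poly r' x \<noteq> 0) \<and>
          (deriv ^^ n) (\<lambda>s. poly p s / poly r s) = (\<lambda>s. poly p' s / poly r' s)" for n
  proof (induction n)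
    case 0
    show ?case using r by auto
  next
    case (Suc n)
    then obtain p' r' where r': "\<forall>x. poly r' x \<noteq> 0"
      and IH: "(deriv ^^ n) (\<lambda>s. poly p s / poly r s) = (\<lambda>s. poly p' s / poly r' s)" by blast
    have "(deriv ^^ Suc n) (\<lambda>s. poly p s / poly r s)
        = (\<lambda>s. poly (pderiv p' * r' - p' * pderiv r') s / poly (r' * r') s)"
      using IH r' has_real_derivative_poly_quotient[THEN DERIV_imp_deriv] by auto
    moreover have "\<forall>x. poly (r' * r') x \<noteq> 0" using r' by simp
    ultimately show ?case by blast
  qed
  then show ?thesis
    unfolding smooth_on_def real_differentiable_def
    by (metis has_real_derivative_poly_quotient)
qed

lemma has_real_derivative_bump:
  fixes a C x :: real
  assumes "a > 0"
  shows "((\<lambda>s. C * s / (a + s^2)^2) has_real_derivative C * (a - 3 * x^2) / (a + x^2)^3) (at x)"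
proof -
  have u: "a + x^2 > 0" using assms by (simp add: add_pos_nonneg)
  have "((\<lambda>s. C * s / (a + s^2)^2) has_real_derivative
     (C * (a + x^2)^2 - (2 * (a + x^2) * (2 * x)) * (C * x)) / ((a + x^2)^2)^2) (at x)"
    using DERIV_quotient[where f = "\<lambda>s. C * s" and g = "\<lambda>s. (a + s^2)^2"] u
    by (auto intro!: derivative_eq_intros simp: eval_nat_numeral)
  moreover have "(C * (a + x^2)^2 - (2 * (a + x^2) * (2 * x)) * (C * x)) / ((a + x^2)^2)^2
      = C * (a - 3 * x^2) / (a + x^2)^3"
    using u by (simp add: field_simps) algebra
  ultimately show ?thesis by simp
qed

lemma has_real_derivative_bump_deriv:
  fixes a C x :: real
  assumes "a > 0"
  shows "((\<lambda>s. C * (a - 3 * s^2) / (a + s^2)^3) has_real_derivative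
           12 * C * x * (x^2 - a) / (a + x^2)^4) (at x)"
proof -
  have u: "a + x^2 > 0" using assms by (simp add: add_pos_nonneg)
  have "((\<lambda>s. C * (a - 3 * s^2) / (a + s^2)^3) has_real_derivative
     (C * (- 6 * x) * (a + x^2)^3 - (3 * (a + x^2)^2 * (2 * x)) * (C * (a - 3 * x^2))) / ((a + x^2)^3)^2) (at x)"
    using DERIV_quotient[where f = "\<lambda>s. C * (a - 3 * s^2)" and g = "\<lambda>s. (a + s^2)^3"] u
    by (auto intro!: derivative_eq_intros simp: eval_nat_numeral)
  moreover have "(C * (- 6 * x) * (a + x^2)^3 - (3 * (a + x^2)^2 * (2 * x)) * (C * (a - 3 * x^2))) / ((a + x^2)^3)^2
      = 12 * C * x * (x^2 - a) / (a + x^2)^4"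
    using u by (simp add: field_simps) algebra
  ultimately show ?thesis by simp
qed

definition explicit_sol :: "real \<Rightarrow> real \<Rightarrow> real" where
  "explicit_sol R1 s = 48 * R1^3 / 5 * s / (2 * R1 + s^2)^2"

lemma deriv_explicit_sol:
  assumes "R1 > 0"
  shows "deriv (explicit_sol R1) = (\<lambda>s. 48 * R1^3 / 5 * (2 * R1 - 3 * s^2) / (2 * R1 + s^2)^3)"
  using has_real_derivative_bump[of "2 * R1" "48 * R1^3 / 5"] assms
  by (intro ext DERIV_imp_deriv) (simp add: explicit_sol_def [abs_def])

lemma deriv2_explicit_sol:
  assumes "R1 > 0"
  shows "deriv (deriv (explicit_sol R1))
           = (\<lambda>s. 12 * (48 * R1^3 / 5) * s * (s^2 - 2 * R1) / (2 * R1 + s^2)^4)"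
  unfolding deriv_explicit_sol[OF assms]
  using has_real_derivative_bump_deriv[of "2 * R1" "48 * R1^3 / 5"] assms
  by (intro ext DERIV_imp_deriv) simp

lemma explicit_sol_ode:
  fixes R1 s :: real
  assumes R1: "R1 > 0" and s: "s > 0"
  shows "deriv (deriv (explicit_sol R1)) s
           + (1 / s + 3 * s / (R1 * (1 + s\<^sup>2 / (2 * R1)))) * deriv (explicit_sol R1) s
           - explicit_sol R1 s / s\<^sup>2
         = - 12 * s / (1 + s\<^sup>2 / (2 * R1)) ^ 3"
proof -
  define u where "u = 2 * R1 + s^2"
  define C where "C = 48 * R1^3 / 5"
  have u: "u > 0" using R1 by (simp add: u_def add_pos_nonneg)
  have weight: "1 + s\<^sup>2 / (2 * R1) = u / (2 * R1)"
    using R1 by (simp add: u_def field_simps)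
  have "deriv (deriv (explicit_sol R1)) s
           + (1 / s + 3 * s / (R1 * (1 + s\<^sup>2 / (2 * R1)))) * deriv (explicit_sol R1) s
           - explicit_sol R1 s / s\<^sup>2
      = (12 * C * s^2 * (s^2 - 2 * R1) + (u + 6 * s^2) * C * (2 * R1 - 3 * s^2) - C * u^2) / (s * u^4)"
    unfolding deriv2_explicit_sol[OF R1]
    unfolding deriv_explicit_sol[OF R1] explicit_sol_def weight C_def[symmetric] u_def[symmetric]
    using R1 s u by (simp add: field_simps) algebra
  also have "12 * C * s^2 * (s^2 - 2 * R1) + (u + 6 * s^2) * C * (2 * R1 - 3 * s^2) - C * u^2
        = - 12 * s^2 * (2 * R1)^3 * u"
    unfolding u_def C_def by algebra
  also have "- 12 * s^2 * (2 * R1)^3 * u / (s * u^4) = - 12 * s / (1 + s\<^sup>2 / (2 * R1)) ^ 3"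
    unfolding weight using R1 s u by (simp add: field_simps) algebra
  finally show ?thesis .
qed

lemma is_sol_explicit_sol:
  assumes R1: "R1 > 0"
  shows "is_sol R1 (explicit_sol R1)"
  unfolding is_sol_def
proof (intro conjI allI impI)
  have rational: "explicit_sol R1 = (\<lambda>s. poly [:0, 48 * R1^3 / 5:] s / poly ([:2 * R1, 0, 1:]^2) s)"
    by (simp add: explicit_sol_def [abs_def] power2_eq_square algebra_simps)
  have "poly ([:2 * R1, 0, 1:]^2) x \<noteq> 0" for x
  proof -
    have "poly ([:2 * R1, 0, 1:]^2) x = (2 * R1 + x^2)^2"
      by (simp add: power2_eq_square algebra_simps)
    moreover have "2 * R1 + x^2 > 0"
      using R1 by (simp add: add_pos_nonneg)
    ultimately show ?thesis
      by simp
  qed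
  then show "smooth_on {0<..} (explicit_sol R1)"
    unfolding rational by (rule smooth_on_poly_quotient)
  then show "continuous_on {0..} (explicit_sol R1)"
    unfolding rational using \<open>\<And>x. poly _ x \<noteq> 0\<close> by (auto intro!: continuous_intros)
  show "explicit_sol R1 0 = 0"
    by (simp add: explicit_sol_def)
  show "(explicit_sol R1 \<longlongrightarrow> 0) at_top"
    unfolding explicit_sol_def [abs_def] using R1 by real_asymp
qed (use explicit_sol_ode[OF R1] in auto)

lemma divide_le_power_bound:
  fixes s M N D :: real
  assumes s: "s > 0" and N: "0 \<le> N" "N \<le> M * s^j" and D: "s^(j + k) \<le> D"
  shows "N / D \<le> M / s^k"
proof -
  have "N / D \<le> M * s^j / s^(j + k)"
    using N D s by (intro frac_le) auto
  also have "\<dots> = M / s^k"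
    using s by (simp add: power_add)
  finally show ?thesis .
qed

lemma bump_minus_tail_bound:
  fixes a C s :: real
  assumes a: "a > 0" and C: "C \<ge> 0" and s: "s > 1"
  shows "\<bar>C * s / (a + s^2)^2 - C / s^3\<bar> \<le> C * (2 * a + a^2) / s^4"
proof -
  have u: "a + s^2 > 0" using a by (simp add: add_pos_nonneg)
  have "C * s / (a + s^2)^2 - C / s^3 = - (C * (2 * a * s^2 + a^2) / (s^3 * (a + s^2)^2))"
    using u s by (simp add: field_simps) algebra
  moreover have "C * (2 * a * s^2 + a^2) / (s^3 * (a + s^2)^2) \<le> C * (2 * a + a^2) / s^4"
  proof (rule divide_le_power_bound[where j = 2])
    have "1 \<le> s^2"
      using s by (simp add: one_le_power less_imp_le)
    then have "a^2 \<le> a^2 * s^2"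
      using mult_left_mono[of 1 "s^2" "a^2"] by simp
    then show "C * (2 * a * s^2 + a^2) \<le> C * (2 * a + a^2) * s^2"
      using C by (simp add: algebra_simps mult_left_mono)
    have "s^3 * (s^2)^2 \<le> s^3 * (a + s^2)^2"
      using a s by (intro mult_left_mono power_mono) auto
    moreover have "s^(2 + 4) \<le> s^3 * (s^2)^2"
      using s by (simp flip: power_add power_mult)
    ultimately show "s^(2 + 4) \<le> s^3 * (a + s^2)^2" by linarith
  qed (use a C s in auto)
  ultimately show ?thesis
    using a C s u by simp
qed

lemma bump_deriv_minus_tail_bound:
  fixes a C s :: real
  assumes a: "a > 0" and C: "C \<ge> 0" and s: "s > 1"
  shows "\<bar>s * (C * (a - 3 * s^2) / (a + s^2)^3 + 3 * C / s^4)\<bar>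
           \<le> C * (10 * a + 9 * a^2 + 3 * a^3) / s^4"
proof -
  have u: "a + s^2 > 0" using a by (simp add: add_pos_nonneg)
  have "s * (C * (a - 3 * s^2) / (a + s^2)^3 + 3 * C / s^4)
      = C * (10 * a * s^4 + 9 * a^2 * s^2 + 3 * a^3) / (s^3 * (a + s^2)^3)"
    using u s by (simp add: field_simps) algebra
  moreover have "C * (10 * a * s^4 + 9 * a^2 * s^2 + 3 * a^3) / (s^3 * (a + s^2)^3)
      \<le> C * (10 * a + 9 * a^2 + 3 * a^3) / s^4"
  proof (rule divide_le_power_bound[where j = 4])
    have "s^2 \<le> s^4" "1 \<le> s^4"
      using s by (auto intro!: power_increasing one_le_power)
    then have "10 * a * s^4 + 9 * a^2 * s^2 + 3 * a^3 \<le> (10 * a + 9 * a^2 + 3 * a^3) * s^4"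
      using a by (simp add: algebra_simps add_mono mult_left_mono)
    then show "C * (10 * a * s^4 + 9 * a^2 * s^2 + 3 * a^3) \<le> C * (10 * a + 9 * a^2 + 3 * a^3) * s^4"
      using C by (metis mult.assoc mult_left_mono)
    have "s^3 * (s^2)^3 \<le> s^3 * (a + s^2)^3"
      using a s by (intro mult_left_mono power_mono) auto
    moreover have "s^(4 + 4) \<le> s^3 * (s^2)^3"
      using s by (simp flip: power_add power_mult)
    ultimately show "s^(4 + 4) \<le> s^3 * (a + s^2)^3" by linarith
  qed (use a C s in auto)
  ultimately show ?thesis
    using a C s u by simp
qed

lemma explicit_sol_asymptotics:
  assumes R1: "R1 > 0"
  obtains K where "\<And>s. s > 1 \<Longrightarrow>
      \<bar>explicit_sol R1 s - 48 * R1 ^ 3 / (5 * s ^ 3)\<bar> \<le> K / s ^ 4 \<and>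
      \<bar>s * (deriv (explicit_sol R1) s + 144 * R1 ^ 3 / (5 * s ^ 4))\<bar> \<le> K / s ^ 4"
proof
  define a where "a = 2 * R1"
  define C where "C = 48 * R1^3 / 5"
  define K\<^sub>0 where "K\<^sub>0 = C * (2 * a + a^2)"
  define K\<^sub>1 where "K\<^sub>1 = C * (10 * a + 9 * a^2 + 3 * a^3)"
  have a: "a > 0" and C: "C \<ge> 0" using R1 by (simp_all add: a_def C_def)
  fix s :: real
  assume s: "s > 1"
  have "\<bar>explicit_sol R1 s - 48 * R1 ^ 3 / (5 * s ^ 3)\<bar> \<le> K\<^sub>0 / s^4"
    using bump_minus_tail_bound[OF a C s] by (simp add: explicit_sol_def a_def C_def K\<^sub>0_def)
  moreover have "\<bar>s * (deriv (explicit_sol R1) s + 144 * R1 ^ 3 / (5 * s ^ 4))\<bar> \<le> K\<^sub>1 / s^4"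
    using bump_deriv_minus_tail_bound[OF a C s]
    by (simp add: deriv_explicit_sol[OF R1] a_def C_def K\<^sub>1_def)
  moreover have "0 \<le> K\<^sub>0 / s^4" "0 \<le> K\<^sub>1 / s^4"
    using a C s by (simp_all add: K\<^sub>0_def K\<^sub>1_def)
  ultimately show "\<bar>explicit_sol R1 s - 48 * R1 ^ 3 / (5 * s ^ 3)\<bar> \<le> (K\<^sub>0 + K\<^sub>1) / s ^ 4 \<and>
      \<bar>s * (deriv (explicit_sol R1) s + 144 * R1 ^ 3 / (5 * s ^ 4))\<bar> \<le> (K\<^sub>0 + K\<^sub>1) / s ^ 4"
    unfolding add_divide_distrib by linarith
qed

lemma is_sol_has_derivatives:
  assumes "is_sol R1 q" and "s > 0"
  shows "(q has_real_derivative deriv q s) (at s)"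
    and "(deriv q has_real_derivative deriv (deriv q) s) (at s)"
proof -
  have "smooth_on {0<..} q"
    using assms(1) by (simp add: is_sol_def)
  then have "((deriv ^^ 0) q) differentiable (at s)" "((deriv ^^ 1) q) differentiable (at s)"
    using assms(2) unfolding smooth_on_def by blast+
  then show "(q has_real_derivative deriv q s) (at s)"
    and "(deriv q has_real_derivative deriv (deriv q) s) (at s)"
    by (simp_all add: DERIV_deriv_iff_real_differentiable)
qed

lemma is_sol_le:
  assumes q1: "is_sol R1 q1" and q2: "is_sol R1 q2" and x: "x \<ge> 0"
  shows "q1 x \<le> q2 x"
proof -
  have "q1 x - q2 x \<le> 0"
  proof (rule halfline_maximum_principle[where h = "\<lambda>s. q1 s - q2 s"
        and h' = "\<lambda>s. deriv q1 s - deriv q2 s" and h'' = "\<lambda>s. deriv (deriv q1) s - deriv (deriv q2) s"])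
    show "continuous_on {0..} (\<lambda>s. q1 s - q2 s)"
      using q1 q2 by (auto simp: is_sol_def intro!: continuous_intros)
    show "((\<lambda>s. q1 s - q2 s) \<longlongrightarrow> 0) at_top"
      using q1 q2 tendsto_diff[of q1 0 at_top q2 0] by (simp add: is_sol_def)
    show "((\<lambda>s. q1 s - q2 s) has_real_derivative deriv q1 s - deriv q2 s) (at s)"
      and "((\<lambda>s. deriv q1 s - deriv q2 s) has_real_derivative
              deriv (deriv q1) s - deriv (deriv q2) s) (at s)" if "s > 0" for s
      using is_sol_has_derivatives[OF q1 that] is_sol_has_derivatives[OF q2 that]
      by (auto intro!: derivative_intros)
    show "deriv (deriv q1) s - deriv (deriv q2) s > 0"
      if "s > 0" "deriv q1 s - deriv q2 s = 0" "q1 s - q2 s > 0" for s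
    proof -
      have ode: "deriv (deriv q) s + (1 / s + 3 * s / (R1 * (1 + s\<^sup>2 / (2 * R1)))) * deriv q s
                  - q s / s\<^sup>2 = - 12 * s / (1 + s\<^sup>2 / (2 * R1)) ^ 3" if "is_sol R1 q" for q
        using that \<open>s > 0\<close> unfolding is_sol_def by blast
      have "deriv q1 s = deriv q2 s"
        using that(2) by simp
      then have "deriv (deriv q1) s - deriv (deriv q2) s = (q1 s - q2 s) / s\<^sup>2"
        using ode[OF q1] ode[OF q2] unfolding diff_divide_distrib by simp
      then show ?thesis
        using that by simp
    qed
  qed (use q1 q2 x in \<open>simp_all add: is_sol_def\<close>)
  then show ?thesis by simp
qed

lemma is_sol_unique:
  assumes "is_sol R1 q1" and "is_sol R1 q2" and "s \<ge> 0"
  shows "q1 s = q2 s"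
  using is_sol_le[OF assms] is_sol_le[OF assms(2,1,3)] by simp

lemma is_sol_deriv_unique:
  assumes q1: "is_sol R1 q1" and q2: "is_sol R1 q2" and s: "s > 0"
  shows "deriv q1 s = deriv q2 s"
proof (rule deriv_cong_ev[OF _ refl])
  have "eventually (\<lambda>x. x \<in> {0<..}) (nhds s)"
    using s by (intro eventually_nhds_in_open) auto
  then show "eventually (\<lambda>x. q1 x = q2 x) (nhds s)"
    by (rule eventually_mono) (use is_sol_unique[OF q1 q2] in auto)
qed

theorem lemma3:
  fixes R1 :: real
  assumes "R1 > 0"
  shows "(\<exists>q. is_sol R1 q)
    \<and> (\<forall>q1 q2. is_sol R1 q1 \<longrightarrow> is_sol R1 q2 \<longrightarrow> (\<forall>s\<ge>0. q1 s = q2 s))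
    \<and> (\<forall>q. is_sol R1 q \<longrightarrow>
         (\<exists>K. \<forall>s>1.
            \<bar>q s - 48 * R1 ^ 3 / (5 * s ^ 3)\<bar> \<le> K / s ^ 4 \<and>
            \<bar>s * (deriv q s + 144 * R1 ^ 3 / (5 * s ^ 4))\<bar> \<le> K / s ^ 4))"
proof (intro conjI)
  have explicit: "is_sol R1 (explicit_sol R1)"
    using assms by (rule is_sol_explicit_sol)
  then show "\<exists>q. is_sol R1 q" by blast
  show "\<forall>q1 q2. is_sol R1 q1 \<longrightarrow> is_sol R1 q2 \<longrightarrow> (\<forall>s\<ge>0. q1 s = q2 s)"
    using is_sol_unique by blast
  obtain K where K: "\<And>s. s > 1 \<Longrightarrow>
      \<bar>explicit_sol R1 s - 48 * R1 ^ 3 / (5 * s ^ 3)\<bar> \<le> K / s ^ 4 \<and>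
      \<bar>s * (deriv (explicit_sol R1) s + 144 * R1 ^ 3 / (5 * s ^ 4))\<bar> \<le> K / s ^ 4"
    using explicit_sol_asymptotics[OF assms] by blast
  show "\<forall>q. is_sol R1 q \<longrightarrow> (\<exists>K. \<forall>s>1.
      \<bar>q s - 48 * R1 ^ 3 / (5 * s ^ 3)\<bar> \<le> K / s ^ 4 \<and>
      \<bar>s * (deriv q s + 144 * R1 ^ 3 / (5 * s ^ 4))\<bar> \<le> K / s ^ 4)"
  proof (intro allI impI exI[of _ K])
    fix q :: "real \<Rightarrow> real" and s :: real
    assume q: "is_sol R1 q" and s: "s > 1"
    then have "q s = explicit_sol R1 s" "deriv q s = deriv (explicit_sol R1) s"
      using is_sol_unique[OF q explicit] is_sol_deriv_unique[OF q explicit] by simp_all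
    with K[OF s] show "\<bar>q s - 48 * R1 ^ 3 / (5 * s ^ 3)\<bar> \<le> K / s ^ 4 \<and>
        \<bar>s * (deriv q s + 144 * R1 ^ 3 / (5 * s ^ 4))\<bar> \<le> K / s ^ 4"
      by simp
  qed
qed

end
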